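(* In the upper half-space model $\mathbb{H}^3=\{x_3>0\}$ with metric $\frac{1}{x_3^2}(dx_1^2+dx_2^2+dx_3^2)$, let $\gamma:[0,\infty)\to\mathbb{H}^3$, $\gamma(s)=(\gamma_1(s),0,\gamma_2(s))$, be a regular curve parametrized by hyperbolic arc length with $\gamma_1>0$, $\gamma_2>0$, and set $x_g(\gamma([0,s]))=\frac{1}{s}\int_0^s\frac{\gamma_1(t)}{\gamma_2(t)}\,dt$. Suppose $\gamma$ has confined centroid, i.e. $\lim_{s\to\infty}x_g(\gamma([0,s]))$ exists and is finite. Then the end of revolution $f(\theta,s)=R_\theta\gamma(s)$ is parabolic.
   Context: $R_\theta$ is the rotation of angle $\theta$ about the $x_3$-axis, an isometry of $\mathbb{H}^3$. The end carries the induced metric. An end is parabolic if every bounded harmonic function on it is determined by its boundary values. *)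

theory Defs
  imports "HOL-Analysis.Analysis"
begin

definition hyp_inner :: "real^3 \<Rightarrow> real^3 \<Rightarrow> real^3 \<Rightarrow> real" where
  "hyp_inner p v w = inner v w / (p$3)\<^sup>2"

definition rot3 :: "real \<Rightarrow> real^3 \<Rightarrow> real^3" where
  "rot3 \<theta> p = vector [cos \<theta> * p$1 - sin \<theta> * p$2, sin \<theta> * p$1 + cos \<theta> * p$2, p$3]"

definition hcurve :: "(real \<Rightarrow> real) \<Rightarrow> (real \<Rightarrow> real) \<Rightarrow> real \<Rightarrow> real^3" where
  "hcurve \<gamma>1 \<gamma>2 s = vector [\<gamma>1 s, 0, \<gamma>2 s]"

definition smooth_near_halfline :: "(real \<Rightarrow> real) \<Rightarrow> bool" where
  "smooth_near_halfline g \<longleftrightarrow>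
     (\<exists>\<epsilon>>0. \<forall>k x. x > -\<epsilon> \<longrightarrow> ((deriv ^^ k) g) differentiable (at x))"

definition centroid_xg :: "(real \<Rightarrow> real) \<Rightarrow> (real \<Rightarrow> real) \<Rightarrow> real \<Rightarrow> real" where
  "centroid_xg \<gamma>1 \<gamma>2 s = (1 / s) * integral {0..s} (\<lambda>t. \<gamma>1 t / \<gamma>2 t)"

definition pd_th :: "(real \<Rightarrow> real \<Rightarrow> real) \<Rightarrow> real \<Rightarrow> real \<Rightarrow> real" where
  "pd_th u \<theta> s = deriv (\<lambda>t. u t s) \<theta>"

definition pd_s :: "(real \<Rightarrow> real \<Rightarrow> real) \<Rightarrow> real \<Rightarrow> real \<Rightarrow> real" where
  "pd_s u \<theta> s = deriv (\<lambda>t. u \<theta> t) s"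

definition unc :: "(real \<Rightarrow> real \<Rightarrow> real) \<Rightarrow> real \<times> real \<Rightarrow> real" where
  "unc u p = u (fst p) (snd p)"

definition C1_on :: "(real \<times> real) set \<Rightarrow> (real \<Rightarrow> real \<Rightarrow> real) \<Rightarrow> bool" where
  "C1_on S u \<longleftrightarrow> continuous_on S (unc u) \<and>
     (\<forall>p\<in>S. ((\<lambda>t. u t (snd p)) has_real_derivative pd_th u (fst p) (snd p)) (at (fst p)) \<and>
             ((\<lambda>t. u (fst p) t) has_real_derivative pd_s u (fst p) (snd p)) (at (snd p))) \<and>
     continuous_on S (unc (pd_th u)) \<and> continuous_on S (unc (pd_s u))"

definition C2_on :: "(real \<times> real) set \<Rightarrow> (real \<Rightarrow> real \<Rightarrow> real) \<Rightarrow> bool" where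
  "C2_on S u \<longleftrightarrow> C1_on S u \<and> C1_on S (pd_th u) \<and> C1_on S (pd_s u)"

definition f_th :: "(real \<Rightarrow> real \<Rightarrow> real^3) \<Rightarrow> real \<Rightarrow> real \<Rightarrow> real^3" where
  "f_th f \<theta> s = vector_derivative (\<lambda>t. f t s) (at \<theta>)"

definition f_s :: "(real \<Rightarrow> real \<Rightarrow> real^3) \<Rightarrow> real \<Rightarrow> real \<Rightarrow> real^3" where
  "f_s f \<theta> s = vector_derivative (\<lambda>t. f \<theta> t) (at s)"

definition metE :: "(real \<Rightarrow> real \<Rightarrow> real^3) \<Rightarrow> real \<Rightarrow> real \<Rightarrow> real" where
  "metE f \<theta> s = hyp_inner (f \<theta> s) (f_th f \<theta> s) (f_th f \<theta> s)"

definition metF :: "(real \<Rightarrow> real \<Rightarrow> real^3) \<Rightarrow> real \<Rightarrow> real \<Rightarrow> real" where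
  "metF f \<theta> s = hyp_inner (f \<theta> s) (f_th f \<theta> s) (f_s f \<theta> s)"

definition metG :: "(real \<Rightarrow> real \<Rightarrow> real^3) \<Rightarrow> real \<Rightarrow> real \<Rightarrow> real" where
  "metG f \<theta> s = hyp_inner (f \<theta> s) (f_s f \<theta> s) (f_s f \<theta> s)"

definition metD :: "(real \<Rightarrow> real \<Rightarrow> real^3) \<Rightarrow> real \<Rightarrow> real \<Rightarrow> real" where
  "metD f \<theta> s = metE f \<theta> s * metG f \<theta> s - (metF f \<theta> s)\<^sup>2"

text \<open>Laplace-Beltrami operator of the induced metric in coordinates:
  (1/sqrt D) (d_theta (sqrt D (g^{tt} u_t + g^{ts} u_s)) + d_s (sqrt D (g^{st} u_t + g^{ss} u_s))).\<close>
definition laplace_beltrami ::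
  "(real \<Rightarrow> real \<Rightarrow> real^3) \<Rightarrow> (real \<Rightarrow> real \<Rightarrow> real) \<Rightarrow> real \<Rightarrow> real \<Rightarrow> real" where
  "laplace_beltrami f u \<theta> s =
     (1 / sqrt (metD f \<theta> s)) *
     (pd_th (\<lambda>a b. sqrt (metD f a b) *
              (metG f a b * pd_th u a b - metF f a b * pd_s u a b) / metD f a b) \<theta> s
    + pd_s (\<lambda>a b. sqrt (metD f a b) *
              (metE f a b * pd_s u a b - metF f a b * pd_th u a b) / metD f a b) \<theta> s)"

text \<open>An end parametrized by f(theta,s), theta in R/2piZ, s \<ge> 0, with boundary s = 0.
  A function on the end is a 2pi-periodic function of theta; it is a bounded
  harmonic function if it is continuous up to the boundary, bounded, C^2 in the
  interior s > 0 and annihilated there by the Laplace-Beltrami operator of the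
  induced metric.\<close>
definition bounded_harmonic_on_end ::
  "(real \<Rightarrow> real \<Rightarrow> real^3) \<Rightarrow> (real \<Rightarrow> real \<Rightarrow> real) \<Rightarrow> bool" where
  "bounded_harmonic_on_end f u \<longleftrightarrow>
     (\<forall>\<theta> s. u (\<theta> + 2 * pi) s = u \<theta> s) \<and>
     continuous_on {p. snd p \<ge> 0} (unc u) \<and>
     (\<exists>B. \<forall>\<theta> s. s \<ge> 0 \<longrightarrow> \<bar>u \<theta> s\<bar> \<le> B) \<and>
     C2_on {p. snd p > 0} u \<and>
     (\<forall>\<theta> s. s > 0 \<longrightarrow> laplace_beltrami f u \<theta> s = 0)"

definition parabolic_end :: "(real \<Rightarrow> real \<Rightarrow> real^3) \<Rightarrow> bool" where
  "parabolic_end f \<longleftrightarrow>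
     (\<forall>u v. bounded_harmonic_on_end f u \<and> bounded_harmonic_on_end f v \<and>
            (\<forall>\<theta>. u \<theta> 0 = v \<theta> 0) \<longrightarrow> (\<forall>\<theta> s. s \<ge> 0 \<longrightarrow> u \<theta> s = v \<theta> s))"

end

theory Submission
  imports Defs "HOL-Library.Periodic_Fun"
begin

text \<open>The end of revolution carries the warped metric \<open>r(s)\<^sup>2 d\<theta>\<^sup>2 + ds\<^sup>2\<close> with
  \<open>r = \<gamma>1/\<gamma>2\<close>, whose Laplacian is \<open>(u\<^sub>\<theta>\<^sub>\<theta>/r + (r u\<^sub>s)\<^sub>s)/r\<close>. Hence
  \<open>h(s) = \<integral>\<^sub>0\<^sup>s 1/r\<close> is harmonic and vanishes on the boundary. The confined
  centroid bounds the mean of \<open>r\<close>, so by the convexity of \<open>1/x\<close> the mean of \<open>1/r\<close> is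
  bounded below and \<open>h \<rightarrow> \<infinity>\<close>. For bounded harmonic \<open>u, v\<close> with \<open>u \<le> v\<close> on the
  boundary, \<open>u - v - \<epsilon> h + \<delta> h\<^sup>2\<close> is strictly subharmonic, nonpositive at \<open>s = 0\<close>
  and negative at a large \<open>s = S\<close>; so it is nonpositive everywhere, and \<open>\<epsilon>, \<delta> \<rightarrow> 0\<close>
  gives \<open>u \<le> v\<close>.\<close>

lemma periodic_representative:
  fixes f :: "real \<Rightarrow> 'a"
  assumes "T > 0" and "\<And>x. f (x + T) = f x"
  obtains y where "0 \<le> y" "y \<le> T" "f y = f x"
proof
  interpret periodic_fun_simple f T by standard (rule assms(2))
  define k where "k = \<lfloor>x / T\<rfloor>"
  have "of_int k \<le> x / T" "x / T < of_int k + 1"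
    unfolding k_def by linarith+
  then have "of_int k * T \<le> x" "x < (of_int k + 1) * T"
    using assms(1) by (simp_all add: pos_le_divide_eq pos_divide_less_eq)
  then show "0 \<le> x - of_int k * T" "x - of_int k * T \<le> T" by (simp_all add: algebra_simps)
  show "f (x - of_int k * T) = f x" by (rule minus_of_int)
qed

lemma periodic_strip_attains_max:
  fixes g :: "real \<times> real \<Rightarrow> real"
  assumes T: "T > 0" and S: "0 \<le> S"
    and cont: "continuous_on ({0..T} \<times> {0..S}) g"
    and per: "\<And>t b. g (t + T, b) = g (t, b)"
  obtains \<theta>0 s0 where "0 \<le> s0" "s0 \<le> S"
    "\<And>t b. 0 \<le> b \<Longrightarrow> b \<le> S \<Longrightarrow> g (t, b) \<le> g (\<theta>0, s0)"
proof -
  have "compact ({0..T} \<times> {0..S})" "{0..T} \<times> {0..S} \<noteq> {}"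
    using T S by (auto intro: compact_Times)
  then obtain p0 where p0: "p0 \<in> {0..T} \<times> {0..S}" and max: "\<And>p. p \<in> {0..T} \<times> {0..S} \<Longrightarrow> g p \<le> g p0"
    using continuous_attains_sup[OF _ _ cont] by blast
  have "g (t, b) \<le> g p0" if "0 \<le> b" "b \<le> S" for t b
  proof -
    obtain t' where "0 \<le> t'" "t' \<le> T" "g (t', b) = g (t, b)"
      using periodic_representative[of T "\<lambda>t. g (t, b)"] T per by blast
    then show ?thesis using max[of "(t', b)"] that by auto
  qed
  with p0 show thesis by (intro that[of "snd p0" "fst p0"]) auto
qed

lemma weighted_deriv_nonpos_at_max:
  fixes q q' \<rho> k :: "real \<Rightarrow> real"
  assumes ab: "a < x0" "x0 < b"
    and max: "\<And>x. x \<in> {a<..<b} \<Longrightarrow> q x \<le> q x0"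
    and q': "\<And>x. x \<in> {a<..<b} \<Longrightarrow> (q has_real_derivative q' x) (at x)"
    and \<rho>: "\<And>x. x \<in> {a<..<b} \<Longrightarrow> \<rho> x > 0"
    and k: "\<And>x. x \<in> {a<..<b} \<Longrightarrow> k x = \<rho> x * q' x"
    and K: "(k has_real_derivative K) (at x0)"
  shows "K \<le> 0"
proof (rule ccontr)
  assume "\<not> K \<le> 0"
  define d0 where "d0 = min (x0 - a) (b - x0)"
  have d0: "d0 > 0" using ab by (simp add: d0_def)
  have "q' x0 = 0"
  proof (rule DERIV_local_max[OF _ d0])
    show "(q has_real_derivative q' x0) (at x0)" using q' ab by auto
    show "\<forall>y. \<bar>x0 - y\<bar> < d0 \<longrightarrow> q y \<le> q x0" using max by (auto simp: d0_def abs_if)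
  qed
  then have "k x0 = 0" using k ab by auto
  moreover obtain d where d: "d > 0" "\<And>h. 0 < h \<Longrightarrow> h < d \<Longrightarrow> k x0 < k (x0 + h)"
    using DERIV_pos_inc_right[OF K] \<open>\<not> K \<le> 0\<close> by force
  define h where "h = min d d0 / 2"
  have h: "h > 0" "h < d" "h < d0" using d d0 by (auto simp: h_def)
  obtain z where z: "x0 < z" "z < x0 + h" "q (x0 + h) - q x0 = h * q' z"
    using MVT2[of x0 "x0 + h" q q'] h q' by (force simp: d0_def)
  have z_in: "z \<in> {a<..<b}" using z h ab by (auto simp: d0_def)
  have "k z > 0" using d(2)[of "z - x0"] z h \<open>k x0 = 0\<close> by auto
  then have "q' z > 0" using k \<rho> z_in by (force simp: zero_less_mult_iff)
  then have "q (x0 + h) > q x0" using z h(1) mult_pos_pos[of h "q' z"] by linarith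
  moreover have "x0 + h \<in> {a<..<b}" using h ab by (auto simp: d0_def)
  ultimately show False using max by force
qed

text \<open>The tangent line of the convex function \<open>1/x\<close> at \<open>c\<close>.\<close>
lemma inverse_ge_tangent_line:
  fixes x c :: real
  assumes "x > 0" "c > 0"
  shows "2 / c - x / c\<^sup>2 \<le> 1 / x"
proof -
  have "0 \<le> (x - c)\<^sup>2 / (x * c\<^sup>2)" using assms by simp
  also have "\<dots> = 1 / x - 2 / c + x / c\<^sup>2"
    using assms by (simp add: field_simps power2_eq_square)
  finally show ?thesis by simp
qed

lemma integral_inverse_tendsto_at_top:
  fixes r :: "real \<Rightarrow> real"
  assumes cont: "continuous_on {0..} r" and pos: "\<And>t. 0 \<le> t \<Longrightarrow> 0 < r t"
    and mean: "\<forall>\<^sub>F S in at_top. integral {0..S} r \<le> C * S"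
  shows "filterlim (\<lambda>S. integral {0..S} (\<lambda>t. 1 / r t)) at_top at_top"
proof -
  define c where "c = max C 1"
  have c: "c > 0" "C \<le> c" by (auto simp: c_def)
  have bound: "1 / c * S \<le> integral {0..S} (\<lambda>t. 1 / r t)" if S: "0 \<le> S" "integral {0..S} r \<le> C * S" for S
  proof -
    have r_cont: "continuous_on {0..S} r" by (rule continuous_on_subset[OF cont]) auto
    then have r_int: "r integrable_on {0..S}" by (rule integrable_continuous_real)
    have "continuous_on {0..S} (\<lambda>t. 1 / r t)"
      by (intro continuous_intros r_cont) (use pos in force)
    then have inv_int: "(\<lambda>t. 1 / r t) integrable_on {0..S}" by (rule integrable_continuous_real)
    have "C * S \<le> c * S" using c S by (simp add: mult_right_mono)
    then have "1 / c * S \<le> 2 / c * S - C * S / c\<^sup>2"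
      using c by (simp add: field_simps power2_eq_square)
    also have "\<dots> \<le> 2 / c * S - integral {0..S} r / c\<^sup>2"
      using S(2) c by (simp add: divide_right_mono)
    also have "\<dots> = integral {0..S} (\<lambda>t. 2 / c - r t / c\<^sup>2)"
      using S r_int by (simp add: integral_diff integrable_on_divide integral_divide integrable_const_ivl content_real)
    also have "\<dots> \<le> integral {0..S} (\<lambda>t. 1 / r t)"
      using r_int inv_int pos c inverse_ge_tangent_line
      by (intro integral_le) (auto intro: integrable_diff integrable_on_divide)
    finally show ?thesis .
  qed
  have "\<forall>\<^sub>F S in at_top. 1 / c * S \<le> integral {0..S} (\<lambda>t. 1 / r t)"
    using eventually_ge_at_top[of 0] mean by eventually_elim (rule bound)
  moreover have "filterlim (\<lambda>S. 1 / c * S) at_top at_top"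
    using c by (intro filterlim_tendsto_pos_mult_at_top[OF tendsto_const _ filterlim_ident]) simp
  ultimately show ?thesis by (rule filterlim_at_top_mono[rotated])
qed

lemma has_vector_derivative_vector3:
  assumes "(a has_real_derivative a') (at x)" "(b has_real_derivative b') (at x)"
    "(c has_real_derivative c') (at x)"
  shows "((\<lambda>t. vector [a t, b t, c t] :: real^3) has_vector_derivative vector [a', b', c']) (at x)"
proof -
  have decomp: "(vector [p, q, w] :: real^3) = p *\<^sub>R vector [1,0,0] + q *\<^sub>R vector [0,1,0] + w *\<^sub>R vector [0,0,1]"
    for p q w by (simp add: vec_eq_iff forall_3)
  have scaled: "((\<lambda>t. f t *\<^sub>R e) has_vector_derivative f' *\<^sub>R e) (at x)"
    if "(f has_real_derivative f') (at x)" for f f' and e :: "real^3"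
    using has_vector_derivative_scaleR[OF that has_vector_derivative_const[of e]] by simp
  show ?thesis
    unfolding decomp[of a'] decomp[of "a _"]
    by (intro has_vector_derivative_add scaled assms)
qed

lemma inner_vec3: "inner (x::real^3) y = x$1 * y$1 + x$2 * y$2 + x$3 * y$3"
  by (simp add: inner_vec_def sum_3)

lemma smooth_near_halfline_differentiable:
  assumes "smooth_near_halfline g" "0 \<le> x"
  shows "g differentiable (at x)"
proof -
  obtain e where "e > 0" "\<And>k x. x > -e \<Longrightarrow> ((deriv ^^ k) g) differentiable (at x)"
    using assms(1) unfolding smooth_near_halfline_def by blast
  from this(2)[of x 0] show ?thesis using \<open>e > 0\<close> assms(2) by simp
qed

lemma metric_of_revolution:
  fixes \<gamma>1 \<gamma>2 :: "real \<Rightarrow> real"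
  defines "F \<equiv> \<lambda>\<theta> s. rot3 \<theta> (hcurve \<gamma>1 \<gamma>2 s)"
  assumes d1: "\<gamma>1 differentiable (at s)" and d2: "\<gamma>2 differentiable (at s)"
  shows "metE F \<theta> s = (\<gamma>1 s / \<gamma>2 s)\<^sup>2"
    and "metF F \<theta> s = 0"
    and "metG F \<theta> s = hyp_inner (hcurve \<gamma>1 \<gamma>2 s)
           (vector_derivative (hcurve \<gamma>1 \<gamma>2) (at s)) (vector_derivative (hcurve \<gamma>1 \<gamma>2) (at s))"
proof -
  have D1: "(\<gamma>1 has_real_derivative deriv \<gamma>1 s) (at s)" and D2: "(\<gamma>2 has_real_derivative deriv \<gamma>2 s) (at s)"
    using d1 d2 DERIV_deriv_iff_real_differentiable by blast+
  have F_eq: "F = (\<lambda>\<theta> s. vector [cos \<theta> * \<gamma>1 s, sin \<theta> * \<gamma>1 s, \<gamma>2 s])"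
    by (simp add: F_def rot3_def hcurve_def fun_eq_iff)
  have hcurve_eq: "hcurve \<gamma>1 \<gamma>2 = (\<lambda>t. vector [\<gamma>1 t, 0, \<gamma>2 t])"
    by (simp add: hcurve_def fun_eq_iff)
  have "((\<lambda>t. vector [cos t * \<gamma>1 s, sin t * \<gamma>1 s, \<gamma>2 s] :: real^3) has_vector_derivative
        vector [- sin \<theta> * \<gamma>1 s, cos \<theta> * \<gamma>1 s, 0]) (at \<theta>)"
    by (intro has_vector_derivative_vector3 derivative_eq_intros) auto
  then have F_th: "f_th F \<theta> s = vector [- sin \<theta> * \<gamma>1 s, cos \<theta> * \<gamma>1 s, 0]"
    unfolding f_th_def F_eq by (rule vector_derivative_at)
  have "((\<lambda>t. vector [cos \<theta> * \<gamma>1 t, sin \<theta> * \<gamma>1 t, \<gamma>2 t] :: real^3) has_vector_derivative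
        vector [cos \<theta> * deriv \<gamma>1 s, sin \<theta> * deriv \<gamma>1 s, deriv \<gamma>2 s]) (at s)"
    by (intro has_vector_derivative_vector3 derivative_eq_intros) (auto intro: D1 D2)
  then have F_s: "f_s F \<theta> s = vector [cos \<theta> * deriv \<gamma>1 s, sin \<theta> * deriv \<gamma>1 s, deriv \<gamma>2 s]"
    unfolding f_s_def F_eq by (rule vector_derivative_at)
  have "((\<lambda>t. vector [\<gamma>1 t, 0, \<gamma>2 t] :: real^3) has_vector_derivative
        vector [deriv \<gamma>1 s, 0, deriv \<gamma>2 s]) (at s)"
    by (intro has_vector_derivative_vector3 derivative_eq_intros) (auto intro: D1 D2)
  then have \<gamma>': "vector_derivative (hcurve \<gamma>1 \<gamma>2) (at s) = vector [deriv \<gamma>1 s, 0, deriv \<gamma>2 s]"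
    unfolding hcurve_eq by (rule vector_derivative_at)
  have height: "F \<theta> s $ 3 = \<gamma>2 s" "hcurve \<gamma>1 \<gamma>2 s $ 3 = \<gamma>2 s"
    by (simp_all add: F_def rot3_def hcurve_def)
  have "inner (f_th F \<theta> s) (f_th F \<theta> s) = (\<gamma>1 s)\<^sup>2"
    unfolding F_th inner_vec3 vector_3 using sin_cos_squared_add[of \<theta>] by algebra
  then show "metE F \<theta> s = (\<gamma>1 s / \<gamma>2 s)\<^sup>2"
    unfolding metE_def hyp_inner_def height by (simp add: power_divide)
  show "metF F \<theta> s = 0"
    unfolding metF_def hyp_inner_def F_th F_s by (simp add: inner_vec3 algebra_simps)
  have "inner (f_s F \<theta> s) (f_s F \<theta> s) = inner (vector_derivative (hcurve \<gamma>1 \<gamma>2) (at s))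
          (vector_derivative (hcurve \<gamma>1 \<gamma>2) (at s))"
    unfolding F_s \<gamma>' inner_vec3 vector_3 using sin_cos_squared_add[of \<theta>] by algebra
  then show "metG F \<theta> s = hyp_inner (hcurve \<gamma>1 \<gamma>2 s)
           (vector_derivative (hcurve \<gamma>1 \<gamma>2) (at s)) (vector_derivative (hcurve \<gamma>1 \<gamma>2) (at s))"
    unfolding metG_def hyp_inner_def height by simp
qed

lemma C2_on_partial_derivatives:
  assumes "C2_on S u" "(\<theta>, s) \<in> S"
  shows "((\<lambda>t. u t s) has_real_derivative pd_th u \<theta> s) (at \<theta>)"
    and "((\<lambda>t. u \<theta> t) has_real_derivative pd_s u \<theta> s) (at s)"
    and "((\<lambda>t. pd_th u t s) has_real_derivative pd_th (pd_th u) \<theta> s) (at \<theta>)"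
    and "((\<lambda>t. pd_s u \<theta> t) has_real_derivative pd_s (pd_s u) \<theta> s) (at s)"
  using assms unfolding C2_on_def C1_on_def by force+

locale warped_end =
  fixes F :: "real \<Rightarrow> real \<Rightarrow> real^3" and r :: "real \<Rightarrow> real"
  assumes warp_pos: "0 \<le> b \<Longrightarrow> 0 < r b"
    and warp_continuous: "continuous_on {0..} r"
    and warp_differentiable: "0 < b \<Longrightarrow> r differentiable (at b)"
    and metE_warp: "0 < b \<Longrightarrow> metE F \<theta> b = (r b)\<^sup>2"
    and metF_warp: "0 < b \<Longrightarrow> metF F \<theta> b = 0"
    and metG_warp: "0 < b \<Longrightarrow> metG F \<theta> b = 1"
begin

definition harmonic_coord :: "real \<Rightarrow> real" where
  "harmonic_coord S = integral {0..S} (\<lambda>t. 1 / r t)"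

lemma continuous_on_inverse_warp: "continuous_on {0..S} (\<lambda>t. 1 / r t)"
proof -
  have "r t \<noteq> 0" if "t \<in> {0..S}" for t using warp_pos[of t] that by simp
  then show ?thesis by (intro continuous_intros continuous_on_subset[OF warp_continuous]) auto
qed

lemma harmonic_coord_0 [simp]: "harmonic_coord 0 = 0"
  by (simp add: harmonic_coord_def)

lemma continuous_on_harmonic_coord: "continuous_on {0..S} harmonic_coord"
  unfolding harmonic_coord_def
  by (rule indefinite_integral_continuous_1[OF integrable_continuous_real[OF continuous_on_inverse_warp]])

lemma harmonic_coord_has_derivative:
  assumes "0 < b"
  shows "(harmonic_coord has_real_derivative 1 / r b) (at b)"
proof -
  have "(harmonic_coord has_real_derivative 1 / r b) (at b within {0..b+1})"
    unfolding harmonic_coord_def[abs_def]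
    by (rule integral_has_real_derivative[OF continuous_on_inverse_warp]) (use assms in auto)
  moreover have "at b within {0..b+1} = at b" by (rule at_within_interior) (use assms in simp)
  ultimately show ?thesis by simp
qed

lemma warp_flux_has_derivative:
  assumes u: "C2_on {p. 0 < snd p} u" and s: "0 < s" and r': "(r has_real_derivative r') (at s)"
  shows "((\<lambda>b. r b * pd_s u \<theta> b) has_real_derivative r' * pd_s u \<theta> s + r s * pd_s (pd_s u) \<theta> s) (at s)"
  using DERIV_mult[OF r' C2_on_partial_derivatives(4)[OF u, of \<theta> s]] s by (simp add: algebra_simps)

lemma laplace_beltrami_warped:
  assumes u: "C2_on {p. 0 < snd p} u" and s: "0 < s" and r': "(r has_real_derivative r') (at s)"
  shows "laplace_beltrami F u \<theta> s =
           (pd_th (pd_th u) \<theta> s / r s + (r' * pd_s u \<theta> s + r s * pd_s (pd_s u) \<theta> s)) / r s"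
proof -
  have sqrt_D: "sqrt (metD F a b) = r b" and D: "metD F a b = (r b)\<^sup>2" if "0 < b" for a b
    using that warp_pos[of b] by (simp_all add: metD_def metE_warp metF_warp metG_warp)
  have "pd_th (\<lambda>a b. sqrt (metD F a b) * (metG F a b * pd_th u a b - metF F a b * pd_s u a b) /
      metD F a b) \<theta> s = deriv (\<lambda>a. pd_th u a s / r s) \<theta>" (is "?angular = _")
    using s warp_pos[of s]
    by (simp add: pd_th_def sqrt_D D metF_warp metG_warp power2_eq_square)
  also have "\<dots> = pd_th (pd_th u) \<theta> s / r s"
    using C2_on_partial_derivatives(3)[OF u, of \<theta> s] s by (intro DERIV_imp_deriv DERIV_cdivide) simp
  finally have angular: "?angular = pd_th (pd_th u) \<theta> s / r s" .
  note flux = warp_flux_has_derivative[OF u s r', of \<theta>]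
  have "pd_s (\<lambda>a b. sqrt (metD F a b) * (metE F a b * pd_s u a b - metF F a b * pd_th u a b) /
      metD F a b) \<theta> s = r' * pd_s u \<theta> s + r s * pd_s (pd_s u) \<theta> s"
    unfolding pd_s_def
  proof (rule DERIV_imp_deriv, rule has_field_derivative_transform_within_open[OF flux[unfolded pd_s_def]])
    fix b :: real assume "b \<in> {0<..}"
    then show "r b * deriv (u \<theta>) b = sqrt (metD F \<theta> b) *
        (metE F \<theta> b * deriv (u \<theta>) b - metF F \<theta> b * pd_th u \<theta> b) / metD F \<theta> b"
      using warp_pos[of b] by (simp add: sqrt_D D metE_warp metF_warp power2_eq_square)
  qed (use s in auto)
  then show ?thesis
    unfolding laplace_beltrami_def angular sqrt_D[OF s] by simp
qed

text \<open>\<open>\<Delta> h = 0\<close> and \<open>\<Delta> h\<^sup>2 = 2 / r\<^sup>2 > 0\<close>, so \<open>w\<close> is strictly subharmonic.\<close>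
lemma perturbed_difference_no_interior_max:
  fixes u v :: "real \<Rightarrow> real \<Rightarrow> real" and \<epsilon> \<delta> :: real
  defines "w t b \<equiv> u t b - v t b - \<epsilon> * harmonic_coord b + \<delta> * (harmonic_coord b)\<^sup>2"
  assumes u: "C2_on {p. 0 < snd p} u" and v: "C2_on {p. 0 < snd p} v"
    and harmonic: "laplace_beltrami F u \<theta>0 s0 = 0" "laplace_beltrami F v \<theta>0 s0 = 0"
    and s0: "0 < s0" "s0 < S" and \<delta>: "0 < \<delta>"
    and max: "\<And>t b. 0 < b \<Longrightarrow> b < S \<Longrightarrow> w t b \<le> w \<theta>0 s0"
  shows False
proof -
  note du = C2_on_partial_derivatives[OF u] and dv = C2_on_partial_derivatives[OF v]
  let ?h = harmonic_coord
  have theta_max: "pd_th (pd_th u) \<theta>0 s0 - pd_th (pd_th v) \<theta>0 s0 \<le> 0"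
  proof (rule weighted_deriv_nonpos_at_max[of "\<theta>0 - 1" \<theta>0 "\<theta>0 + 1" "\<lambda>t. u t s0 - v t s0"
        "\<lambda>t. pd_th u t s0 - pd_th v t s0" "\<lambda>_. 1"])
    show "u t s0 - v t s0 \<le> u \<theta>0 s0 - v \<theta>0 s0" for t
      using max[OF s0, of t] by (simp add: w_def)
    show "((\<lambda>t. u t s0 - v t s0) has_real_derivative pd_th u t s0 - pd_th v t s0) (at t)" for t
      using du(1) dv(1) s0 by (auto intro: DERIV_diff)
    show "((\<lambda>t. pd_th u t s0 - pd_th v t s0) has_real_derivative
        pd_th (pd_th u) \<theta>0 s0 - pd_th (pd_th v) \<theta>0 s0) (at \<theta>0)"
      using du(3) dv(3) s0 by (auto intro: DERIV_diff)
  qed auto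
  obtain r' where r': "(r has_real_derivative r') (at s0)"
    using warp_differentiable[OF s0(1)] DERIV_deriv_iff_real_differentiable by blast
  define Xu where "Xu = r' * pd_s u \<theta>0 s0 + r s0 * pd_s (pd_s u) \<theta>0 s0"
  define Xv where "Xv = r' * pd_s v \<theta>0 s0 + r s0 * pd_s (pd_s v) \<theta>0 s0"
  have s_max: "Xu - Xv + 2 * \<delta> / r s0 \<le> 0"
  proof (rule weighted_deriv_nonpos_at_max[of 0 s0 S "w \<theta>0"
        "\<lambda>b. pd_s u \<theta>0 b - pd_s v \<theta>0 b - \<epsilon> / r b + 2 * \<delta> * ?h b / r b" r
        "\<lambda>b. r b * pd_s u \<theta>0 b - r b * pd_s v \<theta>0 b - \<epsilon> + 2 * \<delta> * ?h b"])
    show "((w \<theta>0) has_real_derivative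
        pd_s u \<theta>0 b - pd_s v \<theta>0 b - \<epsilon> / r b + 2 * \<delta> * ?h b / r b) (at b)" if "b \<in> {0<..<S}" for b
      using that du(2)[of \<theta>0 b] dv(2)[of \<theta>0 b] harmonic_coord_has_derivative[of b]
      unfolding w_def by (auto intro!: derivative_eq_intros)
    show "r b * pd_s u \<theta>0 b - r b * pd_s v \<theta>0 b - \<epsilon> + 2 * \<delta> * ?h b =
        r b * (pd_s u \<theta>0 b - pd_s v \<theta>0 b - \<epsilon> / r b + 2 * \<delta> * ?h b / r b)" if "b \<in> {0<..<S}" for b
      using that warp_pos[of b] by (simp add: field_simps)
    have "((\<lambda>b. r b * pd_s u \<theta>0 b - r b * pd_s v \<theta>0 b - \<epsilon> + 2 * \<delta> * ?h b) has_real_derivative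
        Xu - Xv - 0 + 2 * \<delta> * (1 / r s0)) (at s0)"
      unfolding Xu_def Xv_def
      by (intro DERIV_add DERIV_diff DERIV_cmult DERIV_const warp_flux_has_derivative
          u v r' harmonic_coord_has_derivative s0)
    then show "((\<lambda>b. r b * pd_s u \<theta>0 b - r b * pd_s v \<theta>0 b - \<epsilon> + 2 * \<delta> * ?h b) has_real_derivative
        Xu - Xv + 2 * \<delta> / r s0) (at s0)"
      by simp
  qed (use s0 max warp_pos in auto)
  have r_s0: "0 < r s0" using warp_pos s0 by simp
  have "Xu = - pd_th (pd_th u) \<theta>0 s0 / r s0" "Xv = - pd_th (pd_th v) \<theta>0 s0 / r s0"
    using harmonic laplace_beltrami_warped[OF u s0(1) r', of \<theta>0]
      laplace_beltrami_warped[OF v s0(1) r', of \<theta>0] r_s0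
    by (simp_all add: Xu_def Xv_def field_simps)
  then have "0 \<le> Xu - Xv"
    using theta_max r_s0 by (simp add: diff_divide_distrib[symmetric] divide_nonneg_pos)
  moreover have "0 < 2 * \<delta> / r s0" using \<delta> r_s0 by simp
  ultimately show False using s_max by linarith
qed

lemma bounded_harmonic_boundary_le:
  assumes h_unbounded: "filterlim harmonic_coord at_top at_top"
    and U: "bounded_harmonic_on_end F u" and V: "bounded_harmonic_on_end F v"
    and boundary: "\<And>\<theta>. u \<theta> 0 \<le> v \<theta> 0" and s: "0 \<le> s"
  shows "u \<theta> s \<le> v \<theta> s"
proof (rule ccontr)
  let ?h = harmonic_coord
  assume "\<not> u \<theta> s \<le> v \<theta> s"
  then have \<eta>: "0 < u \<theta> s - v \<theta> s" by simp
  obtain Bu Bv where Bu: "\<And>t b. 0 \<le> b \<Longrightarrow> \<bar>u t b\<bar> \<le> Bu"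
    and Bv: "\<And>t b. 0 \<le> b \<Longrightarrow> \<bar>v t b\<bar> \<le> Bv"
    using U V unfolding bounded_harmonic_on_end_def by metis
  define \<epsilon> where "\<epsilon> = (u \<theta> s - v \<theta> s) / (2 * (\<bar>?h s\<bar> + 1))"
  have \<epsilon>: "0 < \<epsilon>" "\<epsilon> * ?h s < (u \<theta> s - v \<theta> s) / 2"
  proof -
    show "0 < \<epsilon>" using \<eta> by (simp add: \<epsilon>_def add_pos_nonneg)
    have "\<epsilon> * ?h s \<le> \<epsilon> * \<bar>?h s\<bar>" using \<open>0 < \<epsilon>\<close> by (simp add: mult_left_mono)
    also have "\<dots> < \<epsilon> * (\<bar>?h s\<bar> + 1)" using \<open>0 < \<epsilon>\<close> by simp
    also have "\<dots> = (u \<theta> s - v \<theta> s) / 2" unfolding \<epsilon>_def by (simp add: field_simps add_pos_nonneg)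
    finally show "\<epsilon> * ?h s < (u \<theta> s - v \<theta> s) / 2" .
  qed
  have "\<forall>\<^sub>F S in at_top. (Bu + Bv + 1) / \<epsilon> \<le> ?h S \<and> s < S"
    using h_unbounded by (intro eventually_conj eventually_gt_at_top) (simp add: filterlim_at_top)
  then obtain S where S: "s < S" "Bu + Bv + 1 \<le> \<epsilon> * ?h S"
    using \<epsilon>(1) by (auto simp: eventually_at_top_linorder field_simps)
  define \<delta> where "\<delta> = 1 / (2 * ((?h S)\<^sup>2 + 1))"
  have \<delta>: "0 < \<delta>" "\<delta> * (?h S)\<^sup>2 \<le> 1 / 2"
    by (simp_all add: \<delta>_def add_pos_nonneg field_simps)
  define w where "w t b = u t b - v t b - \<epsilon> * ?h b + \<delta> * (?h b)\<^sup>2" for t b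
  have w_cont: "continuous_on ({0..2*pi} \<times> {0..S}) (\<lambda>p. w (fst p) (snd p))"
  proof -
    have strip: "{0..2*pi} \<times> {0..S} \<subseteq> {p. 0 \<le> snd p}" by auto
    have "continuous_on ({0..2*pi} \<times> {0..S}) (\<lambda>p. ?h (snd p))"
      by (rule continuous_on_compose2[OF continuous_on_harmonic_coord continuous_on_snd]) auto
    then show ?thesis
      using continuous_on_subset[OF _ strip] U V
      unfolding w_def bounded_harmonic_on_end_def unc_def
      by (intro continuous_intros) auto
  qed
  have w_periodic: "w (t + 2*pi) b = w t b" for t b
    using U V by (simp add: w_def bounded_harmonic_on_end_def)
  obtain \<theta>0 s0 where s0: "0 \<le> s0" "s0 \<le> S"
    and max: "\<And>t b. 0 \<le> b \<Longrightarrow> b \<le> S \<Longrightarrow> w t b \<le> w \<theta>0 s0"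
    by (rule periodic_strip_attains_max[of "2*pi" S "\<lambda>p. w (fst p) (snd p)"])
      (use w_cont w_periodic S s in auto)
  have "0 \<le> \<delta> * (?h s)\<^sup>2" using \<delta>(1) by simp
  then have "0 < w \<theta> s" using \<eta> \<epsilon>(2) by (simp add: w_def)
  then have w_max_pos: "0 < w \<theta>0 s0" using max[of s \<theta>] s S by simp
  consider "s0 = 0" | "s0 = S" | "0 < s0" "s0 < S" using s0 by linarith
  then show False
  proof cases
    case 1
    then show False using w_max_pos boundary[of \<theta>0] by (simp add: w_def)
  next
    case 2
    have "u \<theta>0 S - v \<theta>0 S \<le> Bu + Bv" using Bu[of S \<theta>0] Bv[of S \<theta>0] S s by auto
    then show False using w_max_pos S(2) \<delta>(2) 2 by (simp add: w_def)
  next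
    case 3
    show False
      by (rule perturbed_difference_no_interior_max[of u v \<theta>0 s0 S \<delta> \<epsilon>])
        (use U V 3 \<delta>(1) max in \<open>auto simp: bounded_harmonic_on_end_def w_def\<close>)
  qed
qed

theorem parabolic_if_harmonic_coord_unbounded:
  assumes "filterlim harmonic_coord at_top at_top"
  shows "parabolic_end F"
  unfolding parabolic_end_def
  using bounded_harmonic_boundary_le[OF assms] by (metis order_antisym order_refl)

end

lemma warped_end_of_revolution:
  fixes \<gamma>1 \<gamma>2 :: "real \<Rightarrow> real"
  assumes smooth1: "smooth_near_halfline \<gamma>1" and smooth2: "smooth_near_halfline \<gamma>2"
    and pos: "\<forall>s\<ge>0. \<gamma>1 s > 0 \<and> \<gamma>2 s > 0"
    and arclength: "\<forall>s\<ge>0. hyp_inner (hcurve \<gamma>1 \<gamma>2 s)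
                       (vector_derivative (hcurve \<gamma>1 \<gamma>2) (at s))
                       (vector_derivative (hcurve \<gamma>1 \<gamma>2) (at s)) = 1"
  shows "warped_end (\<lambda>\<theta> s. rot3 \<theta> (hcurve \<gamma>1 \<gamma>2 s)) (\<lambda>s. \<gamma>1 s / \<gamma>2 s)"
proof
  have diff: "\<gamma>1 differentiable (at s)" "\<gamma>2 differentiable (at s)" if "0 \<le> s" for s
    using smooth_near_halfline_differentiable smooth1 smooth2 that by blast+
  have r_diff: "(\<lambda>s. \<gamma>1 s / \<gamma>2 s) differentiable (at s)" if "0 \<le> s" for s
    using diff[OF that] pos that by (auto intro!: derivative_intros)
  fix b \<theta> :: real
  show "0 \<le> b \<Longrightarrow> 0 < \<gamma>1 b / \<gamma>2 b" using pos by simp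
  show "continuous_on {0..} (\<lambda>s. \<gamma>1 s / \<gamma>2 s)"
    by (intro continuous_at_imp_continuous_on ballI differentiable_imp_continuous_within r_diff) auto
  show "0 < b \<Longrightarrow> (\<lambda>s. \<gamma>1 s / \<gamma>2 s) differentiable (at b)" using r_diff by simp
  assume "0 < b"
  then have "0 \<le> b" by simp
  show "metE (\<lambda>\<theta> s. rot3 \<theta> (hcurve \<gamma>1 \<gamma>2 s)) \<theta> b = (\<gamma>1 b / \<gamma>2 b)\<^sup>2"
    and "metF (\<lambda>\<theta> s. rot3 \<theta> (hcurve \<gamma>1 \<gamma>2 s)) \<theta> b = 0"
    and "metG (\<lambda>\<theta> s. rot3 \<theta> (hcurve \<gamma>1 \<gamma>2 s)) \<theta> b = 1"
    using metric_of_revolution[OF diff[OF \<open>0 \<le> b\<close>]] arclength \<open>0 \<le> b\<close> by simp_all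
qed

theorem theorem8p3:
  fixes \<gamma>1 \<gamma>2 :: "real \<Rightarrow> real"
  assumes smooth1: "smooth_near_halfline \<gamma>1"
    and smooth2: "smooth_near_halfline \<gamma>2"
    and pos: "\<forall>s\<ge>0. \<gamma>1 s > 0 \<and> \<gamma>2 s > 0"
    and arclength: "\<forall>s\<ge>0. hyp_inner (hcurve \<gamma>1 \<gamma>2 s)
                       (vector_derivative (hcurve \<gamma>1 \<gamma>2) (at s))
                       (vector_derivative (hcurve \<gamma>1 \<gamma>2) (at s)) = 1"
    and confined: "\<exists>L. ((\<lambda>s. centroid_xg \<gamma>1 \<gamma>2 s) \<longlongrightarrow> L) at_top"
  shows "parabolic_end (\<lambda>\<theta> s. rot3 \<theta> (hcurve \<gamma>1 \<gamma>2 s))"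
proof -
  interpret warped_end "\<lambda>\<theta> s. rot3 \<theta> (hcurve \<gamma>1 \<gamma>2 s)" "\<lambda>s. \<gamma>1 s / \<gamma>2 s"
    using warped_end_of_revolution[OF smooth1 smooth2 pos arclength] .
  obtain L where "((\<lambda>s. centroid_xg \<gamma>1 \<gamma>2 s) \<longlongrightarrow> L) at_top" using confined by blast
  then have "\<forall>\<^sub>F S in at_top. centroid_xg \<gamma>1 \<gamma>2 S < L + 1" by (rule order_tendstoD) simp
  then have "\<forall>\<^sub>F S in at_top. integral {0..S} (\<lambda>t. \<gamma>1 t / \<gamma>2 t) \<le> (L + 1) * S"
    using eventually_gt_at_top[of 0] by eventually_elim (simp add: centroid_xg_def field_simps)
  then have "filterlim harmonic_coord at_top at_top"
    unfolding harmonic_coord_def[abs_def]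
    using integral_inverse_tendsto_at_top[OF warp_continuous warp_pos] by blast
  then show ?thesis by (rule parabolic_if_harmonic_coord_unbounded)
qed

end
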